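(* Let $n\ge 1$ and let $\varphi$ be a tame automorphism of $\mathbf{C}[x_1,\dots,x_{n+1}]$. For $q\in\mathbf{C}[x_1,\dots,x_n]$, let $\varphi_q$ be the $\mathbf{C}$-algebra endomorphism of $\mathbf{C}[x_1,\dots,x_n]$ sending $x_i$ ($1\le i\le n$) to the polynomial obtained from $\varphi(x_i)$ by substituting $q$ for $x_{n+1}$. Then there exists $q\in\mathbf{C}[x_1,\dots,x_n]$ such that $\varphi_q$ is injective.
   Context: An automorphism of $\mathbf{C}[x_1,\dots,x_N]$ is elementary if it fixes all variables except one, $x_i$, and maps $x_i$ to $x_i + f(x_1,\dots,x_{i-1},x_{i+1},\dots,x_N)$; it is tame if it is a composition of elementary and linear automorphisms. *)

theory Defs
  imports Complex_Main "HOL-Library.Poly_Mapping"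
begin

text \<open>Multivariate polynomials over the complex numbers in the variables
  x_0, x_1, x_2, ... (0-indexed): a monomial is a finitely supported exponent
  vector nat =>0 nat, a polynomial a finitely supported coefficient map.
  Multiplication is the convolution product from Poly_Mapping.\<close>

type_synonym mpoly = "(nat \<Rightarrow>\<^sub>0 nat) \<Rightarrow>\<^sub>0 complex"

definition mpolys :: "nat \<Rightarrow> mpoly set" where
  "mpolys N = {p :: mpoly. \<forall>m\<in>Poly_Mapping.keys p. Poly_Mapping.keys m \<subseteq> {..<N}}"

definition Var :: "nat \<Rightarrow> mpoly" where
  "Var i = Poly_Mapping.single (Poly_Mapping.single i 1) 1"

definition Const :: "complex \<Rightarrow> mpoly" where
  "Const c = Poly_Mapping.single 0 c"

definition subst :: "(nat \<Rightarrow> mpoly) \<Rightarrow> mpoly \<Rightarrow> mpoly" where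
  "subst s p = (\<Sum>m\<in>Poly_Mapping.keys p. Const (Poly_Mapping.lookup p m) * (\<Prod>i\<in>Poly_Mapping.keys m. s i ^ Poly_Mapping.lookup m i))"

text \<open>Tame automorphisms of C[x_0,...,x_{N-1}], represented by the images
  of the variables (variables x_i with i >= N are mapped to themselves).\<close>
inductive tame :: "nat \<Rightarrow> (nat \<Rightarrow> mpoly) \<Rightarrow> bool" for N :: nat where
  elementary: "\<lbrakk> i < N; f \<in> mpolys N; \<forall>m\<in>Poly_Mapping.keys f. Poly_Mapping.lookup m i = 0 \<rbrakk>
      \<Longrightarrow> tame N (Var(i := Var i + f))"
| linear: "\<lbrakk> \<forall>j<N. \<forall>k<N. (\<Sum>l<N. A j l * B l k) = (if j = k then 1 else 0) \<rbrakk>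
      \<Longrightarrow> tame N (\<lambda>j. if j < N then (\<Sum>k<N. Const (A j k) * Var k) else Var j)"
| comp: "\<lbrakk> tame N \<sigma>; tame N \<tau> \<rbrakk> \<Longrightarrow> tame N (\<lambda>j. subst \<sigma> (\<tau> j))"

end

theory Submission
  imports Defs
begin

(* The variables are x_0, ..., x_n.  Let \<psi> be an inverse of \<phi> fixing x_j for j > n.
   If \<phi>_q p = 0, then \<phi> p vanishes under x_n := q, so x_n - q divides \<phi> p, and applying \<psi>
   gives p = (\<psi> x_n - \<psi> q) * \<psi> h.  Degrees in x_n add up under multiplication, so every
   nonzero multiple of a polynomial involving x_n involves x_n; as p does not, p = 0 once
   \<psi> x_n - \<psi> q involves x_n.  Such a q exists: q = 0 if \<psi> x_n involves x_n, and otherwise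
   q = x_i for some i < n with \<psi> x_i involving x_n, since \<psi> (\<phi> x_n) = x_n rules out that \<psi> maps
   every variable to a polynomial free of x_n. *)

lift_definition restrict_keys :: "('k \<Rightarrow> bool) \<Rightarrow> ('k \<Rightarrow>\<^sub>0 'a::zero) \<Rightarrow> 'k \<Rightarrow>\<^sub>0 'a"
  is "\<lambda>P f k. if P k then f k else 0"
  by (erule rev_finite_subset) (auto split: if_splits)

lemma lookup_restrict_keys [simp]:
  "Poly_Mapping.lookup (restrict_keys P p) k = (if P k then Poly_Mapping.lookup p k else 0)"
  by transfer simp

lemma keys_restrict_keys [simp]:
  "Poly_Mapping.keys (restrict_keys P p) = {k \<in> Poly_Mapping.keys p. P k}"
  by (auto simp: in_keys_iff split: if_splits)

lemma sum_single_lookup: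
  "(\<Sum>k\<in>Poly_Mapping.keys p. Poly_Mapping.single k (Poly_Mapping.lookup p k)) = p"
proof (rule poly_mapping_eqI)
  fix x
  show "Poly_Mapping.lookup (\<Sum>k\<in>Poly_Mapping.keys p. Poly_Mapping.single k (Poly_Mapping.lookup p k)) x
      = Poly_Mapping.lookup p x"
    by (cases "x \<in> Poly_Mapping.keys p") (auto simp: lookup_sum lookup_single when_def in_keys_iff)
qed

definition degree_in :: "'v \<Rightarrow> (('v \<Rightarrow>\<^sub>0 nat) \<Rightarrow>\<^sub>0 'a::zero) \<Rightarrow> nat" where
  "degree_in v p = Max (insert 0 ((\<lambda>m. Poly_Mapping.lookup m v) ` Poly_Mapping.keys p))"

definition vars :: "(('v \<Rightarrow>\<^sub>0 nat) \<Rightarrow>\<^sub>0 'a::zero) \<Rightarrow> 'v set" where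
  "vars p = (\<Union>m\<in>Poly_Mapping.keys p. Poly_Mapping.keys m)"

lemma degree_in_le_iff:
  "degree_in v p \<le> d \<longleftrightarrow> (\<forall>m\<in>Poly_Mapping.keys p. Poly_Mapping.lookup m v \<le> d)"
  by (simp add: degree_in_def)

lemma lookup_le_degree_in:
  "m \<in> Poly_Mapping.keys p \<Longrightarrow> Poly_Mapping.lookup m v \<le> degree_in v p"
  using degree_in_le_iff[of v p "degree_in v p"] by blast

lemma degree_in_attained:
  assumes "p \<noteq> 0"
  shows "\<exists>m\<in>Poly_Mapping.keys p. Poly_Mapping.lookup m v = degree_in v p"
proof -
  obtain m0 where m0: "m0 \<in> Poly_Mapping.keys p"
    using assms by (metis keys_eq_empty ex_in_conv)
  have "degree_in v p \<in> insert 0 ((\<lambda>m. Poly_Mapping.lookup m v) ` Poly_Mapping.keys p)"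
    unfolding degree_in_def by (intro Max_in) auto
  then show ?thesis
    using m0 lookup_le_degree_in[OF m0, of v] by auto
qed

lemma in_vars_iff_degree_in: "v \<in> vars p \<longleftrightarrow> 0 < degree_in v p"
proof
  assume "v \<in> vars p"
  then obtain m where "m \<in> Poly_Mapping.keys p" "0 < Poly_Mapping.lookup m v"
    by (auto simp: vars_def in_keys_iff)
  then show "0 < degree_in v p"
    using lookup_le_degree_in by (metis order_less_le_trans)
next
  assume "0 < degree_in v p"
  then have "p \<noteq> 0"
    by (auto simp: degree_in_def)
  then obtain m where "m \<in> Poly_Mapping.keys p" "Poly_Mapping.lookup m v = degree_in v p"
    using degree_in_attained[of p v] by blast
  moreover from this \<open>0 < degree_in v p\<close> have "v \<in> Poly_Mapping.keys m"
    by (simp add: in_keys_iff)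
  ultimately show "v \<in> vars p"
    unfolding vars_def by blast
qed

lemma keys_multE:
  fixes A B :: "('v \<Rightarrow>\<^sub>0 nat) \<Rightarrow>\<^sub>0 'a::comm_semiring_0"
  assumes "c \<in> Poly_Mapping.keys (A * B)"
  obtains a b where "a \<in> Poly_Mapping.keys A" "b \<in> Poly_Mapping.keys B"
    "Poly_Mapping.lookup c v = Poly_Mapping.lookup a v + Poly_Mapping.lookup b v"
  using keys_mult[of A B] assms by (auto simp: lookup_add)

definition lead_in :: "'v \<Rightarrow> (('v \<Rightarrow>\<^sub>0 nat) \<Rightarrow>\<^sub>0 'a::zero) \<Rightarrow> ('v \<Rightarrow>\<^sub>0 nat) \<Rightarrow>\<^sub>0 'a" where
  "lead_in v p = restrict_keys (\<lambda>m. Poly_Mapping.lookup m v = degree_in v p) p"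

lemma lead_in_nonzero: "p \<noteq> 0 \<Longrightarrow> lead_in v p \<noteq> 0"
  using degree_in_attained[of p v] by (auto simp: lead_in_def simp flip: keys_eq_empty)

lemma lookup_keys_lead_in:
  "m \<in> Poly_Mapping.keys (lead_in v p) \<Longrightarrow> Poly_Mapping.lookup m v = degree_in v p"
  by (simp add: lead_in_def)

lemma lookup_keys_diff_lead_in:
  fixes p :: "('v \<Rightarrow>\<^sub>0 nat) \<Rightarrow>\<^sub>0 'a::ab_group_add"
  assumes "m \<in> Poly_Mapping.keys (p - lead_in v p)"
  shows "Poly_Mapping.lookup m v < degree_in v p"
  using assms lookup_le_degree_in[of m p v]
  by (fastforce simp: lead_in_def in_keys_iff lookup_minus split: if_splits)

lemma degree_in_mult:
  fixes g h :: "('v::linorder \<Rightarrow>\<^sub>0 nat) \<Rightarrow>\<^sub>0 'a::idom"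
  assumes "g \<noteq> 0" "h \<noteq> 0"
  shows "degree_in v (g * h) = degree_in v g + degree_in v h"
proof (rule antisym)
  show "degree_in v (g * h) \<le> degree_in v g + degree_in v h"
    unfolding degree_in_le_iff by (metis add_mono keys_multE lookup_le_degree_in)
next
  let ?d = "degree_in v g + degree_in v h"
  define lg lh where "lg = lead_in v g" and "lh = lead_in v h"
  obtain m where m: "m \<in> Poly_Mapping.keys (lg * lh)"
    using lead_in_nonzero assms unfolding lg_def lh_def
    by (metis keys_eq_empty ex_in_conv no_zero_divisors)
  then have m_degree: "Poly_Mapping.lookup m v = ?d"
    by (rule keys_multE[where v = v]) (simp add: lg_def lh_def lookup_keys_lead_in)
  have low_g: "Poly_Mapping.lookup c v < ?d" if "c \<in> Poly_Mapping.keys ((g - lg) * h)" for c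
    using that by (rule keys_multE[where v = v])
      (auto dest!: lookup_keys_diff_lead_in lookup_le_degree_in[of _ h v] simp: lg_def)
  have low_h: "Poly_Mapping.lookup c v < ?d" if "c \<in> Poly_Mapping.keys (lg * (h - lh))" for c
    using that by (rule keys_multE[where v = v])
      (auto dest!: lookup_keys_diff_lead_in simp: lg_def lh_def lookup_keys_lead_in)
  have "m \<notin> Poly_Mapping.keys ((g - lg) * h)" "m \<notin> Poly_Mapping.keys (lg * (h - lh))"
    using low_g[of m] low_h[of m] m_degree by auto
  moreover have "g * h = lg * lh + ((g - lg) * h + lg * (h - lh))"
    by (simp add: algebra_simps)
  ultimately have "Poly_Mapping.lookup (g * h) m = Poly_Mapping.lookup (lg * lh) m"
    by (simp add: lookup_add in_keys_iff)
  with m have "m \<in> Poly_Mapping.keys (g * h)"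
    by (simp add: in_keys_iff)
  with m_degree show "?d \<le> degree_in v (g * h)"
    by (metis lookup_le_degree_in)
qed

lemma vars_subset_vars_mult:
  fixes g h :: "('v::linorder \<Rightarrow>\<^sub>0 nat) \<Rightarrow>\<^sub>0 'a::idom"
  assumes "h \<noteq> 0"
  shows "vars g \<subseteq> vars (g * h)"
proof
  fix v assume "v \<in> vars g"
  then have "g \<noteq> 0" "0 < degree_in v g"
    by (auto simp: in_vars_iff_degree_in degree_in_def)
  then show "v \<in> vars (g * h)"
    by (simp add: in_vars_iff_degree_in degree_in_mult assms)
qed

lemma vars_diff: "vars (p - q) \<subseteq> vars p \<union> vars q"
  unfolding vars_def using keys_diff[of p q] by blast

lemma vars_mult:
  fixes p q :: "('v \<Rightarrow>\<^sub>0 nat) \<Rightarrow>\<^sub>0 'a::comm_semiring_0"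
  shows "vars (p * q) \<subseteq> vars p \<union> vars q"
proof
  fix v
  assume "v \<in> vars (p * q)"
  then obtain c where c: "c \<in> Poly_Mapping.keys (p * q)" "v \<in> Poly_Mapping.keys c"
    by (auto simp: vars_def)
  then obtain a b where "a \<in> Poly_Mapping.keys p" "b \<in> Poly_Mapping.keys q" "c = a + b"
    using keys_mult[of p q] by blast
  then show "v \<in> vars p \<union> vars q"
    using c(2) keys_add[of a b] by (auto simp: vars_def)
qed

lemma vars_sum: "vars (sum f S) \<subseteq> (\<Union>x\<in>S. vars (f x))"
  unfolding vars_def using keys_sum[of f S] by blast

lemma vars_prod:
  fixes f :: "'b \<Rightarrow> ('v \<Rightarrow>\<^sub>0 nat) \<Rightarrow>\<^sub>0 'a::comm_semiring_1"
  shows "vars (prod f S) \<subseteq> (\<Union>x\<in>S. vars (f x))"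
proof (induction S rule: infinite_finite_induct)
  case (insert x S)
  then show ?case
    using vars_mult[of "f x" "prod f S"] by auto
qed (simp_all add: vars_def)

lemma vars_power:
  fixes p :: "('v \<Rightarrow>\<^sub>0 nat) \<Rightarrow>\<^sub>0 'a::comm_semiring_1"
  shows "vars (p ^ k) \<subseteq> vars p"
  using vars_prod[of "\<lambda>_. p" "{..<k}"] by (auto split: if_splits)

lemma Const_0 [simp]: "Const 0 = 0"
  by (simp add: Const_def)

lemma Const_1 [simp]: "Const 1 = 1"
  by (simp add: Const_def)

lemma Const_add: "Const (a + b) = Const a + Const b"
  by (simp add: Const_def single_add)

lemma Const_mult: "Const (a * b) = Const a * Const b"
  by (simp add: Const_def mult_single)

lemma Const_sum: "Const (sum f S) = (\<Sum>x\<in>S. Const (f x))"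
  by (induction S rule: infinite_finite_induct) (auto simp: Const_add)

lemma vars_Const [simp]: "vars (Const c) = {}"
  by (simp add: vars_def Const_def)

lemma vars_Var [simp]: "vars (Var i) = {i}"
  by (simp add: vars_def Var_def)

lemma mpolys_iff_vars: "p \<in> mpolys n \<longleftrightarrow> vars p \<subseteq> {..<n}"
  by (auto simp: mpolys_def vars_def)

definition subst_monomial :: "(nat \<Rightarrow> mpoly) \<Rightarrow> (nat \<Rightarrow>\<^sub>0 nat) \<Rightarrow> mpoly" where
  "subst_monomial s m = (\<Prod>i\<in>Poly_Mapping.keys m. s i ^ Poly_Mapping.lookup m i)"

lemma subst_eq_sum_monomials:
  "subst s p = (\<Sum>m\<in>Poly_Mapping.keys p. Const (Poly_Mapping.lookup p m) * subst_monomial s m)"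
  by (simp add: subst_def subst_monomial_def)

lemma subst_eq_sum_monomials_superset:
  assumes "finite S" "Poly_Mapping.keys p \<subseteq> S"
  shows "subst s p = (\<Sum>m\<in>S. Const (Poly_Mapping.lookup p m) * subst_monomial s m)"
  unfolding subst_eq_sum_monomials
  by (rule sum.mono_neutral_left) (use assms in \<open>auto simp: in_keys_iff Const_def\<close>)

lemma subst_monomial_add: "subst_monomial s (m + m') = subst_monomial s m * subst_monomial s m'"
proof -
  let ?S = "Poly_Mapping.keys m \<union> Poly_Mapping.keys m'"
  have expand: "subst_monomial s k = (\<Prod>i\<in>?S. s i ^ Poly_Mapping.lookup k i)"
    if "Poly_Mapping.keys k \<subseteq> ?S" for k
    unfolding subst_monomial_def
    by (rule prod.mono_neutral_left) (use that in \<open>auto simp: in_keys_iff\<close>)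
  show ?thesis
    using keys_add[of m m']
    by (simp add: expand lookup_add power_add prod.distrib)
qed

lemma subst_single: "subst s (Poly_Mapping.single m c) = Const c * subst_monomial s m"
  by (simp add: subst_def subst_monomial_def Const_def)

lemma subst_add: "subst s (p + q) = subst s p + subst s q"
proof -
  let ?S = "Poly_Mapping.keys p \<union> Poly_Mapping.keys q"
  show ?thesis
    using keys_add[of p q]
    by (simp add: subst_eq_sum_monomials_superset[of ?S] lookup_add Const_add distrib_right
        sum.distrib)
qed

lemma subst_0 [simp]: "subst s 0 = 0"
  by (simp add: subst_def)

lemma subst_diff: "subst s (p - q) = subst s p - subst s q"
  using subst_add[of s "p - q" q] by (simp add: eq_diff_eq)

lemma subst_sum: "subst s (sum f S) = (\<Sum>x\<in>S. subst s (f x))"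
  by (induction S rule: infinite_finite_induct) (auto simp: subst_add)

lemma subst_mult: "subst s (p * q) = subst s p * subst s q"
proof -
  let ?single = "\<lambda>r m. Poly_Mapping.single m (Poly_Mapping.lookup r m)"
  have "p * q = (\<Sum>m\<in>Poly_Mapping.keys p. ?single p m) * (\<Sum>m'\<in>Poly_Mapping.keys q. ?single q m')"
    by (simp add: sum_single_lookup)
  also have "\<dots> = (\<Sum>m\<in>Poly_Mapping.keys p. \<Sum>m'\<in>Poly_Mapping.keys q.
      Poly_Mapping.single (m + m') (Poly_Mapping.lookup p m * Poly_Mapping.lookup q m'))"
    by (simp add: sum_product mult_single)
  finally have "subst s (p * q) = (\<Sum>m\<in>Poly_Mapping.keys p. \<Sum>m'\<in>Poly_Mapping.keys q.
      Const (Poly_Mapping.lookup p m) * subst_monomial s m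
        * (Const (Poly_Mapping.lookup q m') * subst_monomial s m'))"
    by (simp add: subst_sum subst_single subst_monomial_add Const_mult mult_ac)
  also have "\<dots> = subst s p * subst s q"
    by (simp add: subst_eq_sum_monomials sum_product)
  finally show ?thesis .
qed

lemma subst_1 [simp]: "subst s 1 = 1"
  by (simp add: subst_def)

lemma subst_power: "subst s (p ^ k) = subst s p ^ k"
  by (induction k) (auto simp: subst_mult)

lemma subst_prod: "subst s (prod f S) = (\<Prod>x\<in>S. subst s (f x))"
  by (induction S rule: infinite_finite_induct) (auto simp: subst_mult)

lemma subst_Const [simp]: "subst s (Const c) = Const c"
  by (simp add: Const_def subst_single subst_monomial_def)

lemma subst_Var [simp]: "subst s (Var i) = s i"
  by (simp add: Var_def subst_single subst_monomial_def Const_def)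

lemma subst_subst: "subst a (subst b p) = subst (\<lambda>j. subst a (b j)) p"
  by (simp add: subst_eq_sum_monomials[of b] subst_eq_sum_monomials[of "\<lambda>j. subst a (b j)"]
      subst_sum subst_mult subst_monomial_def subst_prod subst_power)

lemma subst_Var_id [simp]: "subst Var p = p"
proof -
  have Var_power: "Var i ^ e = Poly_Mapping.single (Poly_Mapping.single i e) 1" for i e
    by (induction e) (auto simp: Var_def mult_single single_add[symmetric])
  have prod_single: "(\<Prod>i\<in>S. Poly_Mapping.single (f i) (1::complex))
      = Poly_Mapping.single (\<Sum>i\<in>S. f i) 1" for S and f :: "nat \<Rightarrow> nat \<Rightarrow>\<^sub>0 nat"
    by (induction S rule: infinite_finite_induct) (auto simp: mult_single)
  have "subst_monomial Var m = Poly_Mapping.single m 1" for m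
    using sum_single_lookup[of m] by (simp add: subst_monomial_def Var_power prod_single)
  then show ?thesis
    by (simp add: subst_eq_sum_monomials Const_def mult_single sum_single_lookup)
qed

lemma subst_cong:
  assumes "\<And>i. i \<in> vars p \<Longrightarrow> s i = t i"
  shows "subst s p = subst t p"
proof -
  have "s i ^ Poly_Mapping.lookup m i = t i ^ Poly_Mapping.lookup m i"
    if "m \<in> Poly_Mapping.keys p" "i \<in> Poly_Mapping.keys m" for m i
  proof -
    have "s i = t i"
      using that by (intro assms) (auto simp: vars_def)
    then show ?thesis
      by simp
  qed
  then show ?thesis
    by (auto simp: subst_eq_sum_monomials subst_monomial_def intro!: sum.cong prod.cong)
qed

lemma vars_subst: "vars (subst s p) \<subseteq> (\<Union>i\<in>vars p. vars (s i))"
proof -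
  have monomial: "vars (subst_monomial s m) \<subseteq> (\<Union>i\<in>Poly_Mapping.keys m. vars (s i))" for m
  proof -
    have "vars (subst_monomial s m) \<subseteq> (\<Union>i\<in>Poly_Mapping.keys m. vars (s i ^ Poly_Mapping.lookup m i))"
      unfolding subst_monomial_def by (rule vars_prod)
    also have "\<dots> \<subseteq> (\<Union>i\<in>Poly_Mapping.keys m. vars (s i))"
      by (intro UN_mono order_refl vars_power)
    finally show ?thesis .
  qed
  have "vars (subst s p)
      \<subseteq> (\<Union>m\<in>Poly_Mapping.keys p. vars (Const (Poly_Mapping.lookup p m) * subst_monomial s m))"
    unfolding subst_eq_sum_monomials by (rule vars_sum)
  also have "\<dots> \<subseteq> (\<Union>m\<in>Poly_Mapping.keys p. \<Union>i\<in>Poly_Mapping.keys m. vars (s i))"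
    using vars_mult monomial by (intro UN_mono order_refl) fastforce
  also have "\<dots> = (\<Union>i\<in>vars p. vars (s i))"
    by (auto simp: vars_def)
  finally show ?thesis .
qed

lemma dvd_prod_diff:
  fixes d :: "'a::comm_ring_1"
  assumes "\<And>i. i \<in> S \<Longrightarrow> d dvd f i - g i"
  shows "d dvd prod f S - prod g S"
  using assms
proof (induction S rule: infinite_finite_induct)
  case (insert x S)
  have "prod f (insert x S) - prod g (insert x S) = f x * (prod f S - prod g S) + (f x - g x) * prod g S"
    using insert.hyps by (simp add: algebra_simps)
  then show ?case
    using insert by simp
qed simp_all

lemma dvd_power_diff:
  fixes d :: "'a::comm_ring_1"
  shows "d dvd a - b \<Longrightarrow> d dvd a ^ k - b ^ k"
  by (metis dvd_mult2 power_diff_sumr2)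

lemma dvd_subst_diff:
  assumes "\<And>i. d dvd s i - t i"
  shows "d dvd subst s p - subst t p"
proof -
  have "subst s p - subst t p
      = (\<Sum>m\<in>Poly_Mapping.keys p. Const (Poly_Mapping.lookup p m) * (subst_monomial s m - subst_monomial t m))"
    by (simp add: subst_eq_sum_monomials sum_subtractf algebra_simps)
  moreover have "d dvd subst_monomial s m - subst_monomial t m" for m
    unfolding subst_monomial_def by (intro dvd_prod_diff dvd_power_diff assms)
  ultimately show ?thesis
    by (simp add: dvd_sum)
qed

lemma Var_diff_dvd_diff_subst_upd: "(Var v - q) dvd p - subst (Var(v := q)) p"
  using dvd_subst_diff[of "Var v - q" Var "Var(v := q)" p] by simp

lemma subst_elementary_inverse:
  assumes "i \<notin> vars f"
  shows "subst (Var(i := Var i - f)) (Var i + f) = Var i"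
proof -
  have "subst (Var(i := Var i - f)) f = subst Var f"
    using assms by (intro subst_cong) auto
  then show ?thesis
    by (simp add: subst_add)
qed

lemma subst_linear_inverse:
  assumes "\<forall>j<N. \<forall>k<N. (\<Sum>l<N. A j l * B l k) = (if j = k then 1 else 0)" and "j < N"
  shows "subst (\<lambda>j. if j < N then (\<Sum>k<N. Const (B j k) * Var k) else Var j)
      (\<Sum>k<N. Const (A j k) * Var k) = Var j"
    (is "subst ?\<psi> _ = _")
proof -
  have "subst ?\<psi> (\<Sum>k<N. Const (A j k) * Var k) = (\<Sum>k<N. \<Sum>l<N. Const (A j k * B k l) * Var l)"
    by (simp add: subst_sum subst_mult sum_distrib_left Const_mult mult.assoc)
  also have "\<dots> = (\<Sum>l<N. Const (\<Sum>k<N. A j k * B k l) * Var l)"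
    by (subst sum.swap) (simp add: Const_sum sum_distrib_right)
  also have "\<dots> = (\<Sum>l<N. if l = j then Var l else 0)"
    using assms by (intro sum.cong) auto
  finally show ?thesis
    using assms(2) by simp
qed

lemma tame_inverse:
  assumes "tame N \<phi>"
  shows "\<exists>\<psi>. (\<forall>j. subst \<psi> (\<phi> j) = Var j) \<and> (\<forall>j\<ge>N. \<psi> j = Var j)"
  using assms
proof (induction rule: tame.induct)
  case (elementary i f)
  have "i \<notin> vars f"
    using elementary.hyps(3) by (auto simp: vars_def in_keys_iff)
  then have "\<forall>j. subst (Var(i := Var i - f)) ((Var(i := Var i + f)) j) = Var j"
    by (simp add: subst_elementary_inverse)
  moreover have "\<forall>j\<ge>N. (Var(i := Var i - f)) j = Var j"
    using elementary.hyps(1) by simp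
  ultimately show ?case
    by blast
next
  case (linear A B)
  then show ?case
    by (intro exI[of _ "\<lambda>j. if j < N then (\<Sum>k<N. Const (B j k) * Var k) else Var j"])
      (simp add: subst_linear_inverse)
next
  case (comp \<sigma> \<tau>)
  obtain a where a: "\<forall>j. subst a (\<sigma> j) = Var j" "\<forall>j\<ge>N. a j = Var j"
    using comp.IH(1) by blast
  obtain b where b: "\<forall>j. subst b (\<tau> j) = Var j" "\<forall>j\<ge>N. b j = Var j"
    using comp.IH(2) by blast
  have \<sigma>_inverse: "subst (\<lambda>j. subst b (a j)) (\<sigma> k) = b k" for k
    using a(1) by (metis subst_subst subst_Var)
  have "subst (\<lambda>j. subst b (a j)) (subst \<sigma> (\<tau> j)) = Var j" for j
    using b(1) by (simp add: subst_subst \<sigma>_inverse)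
  with a(2) b(2) show ?case
    by (intro exI[of _ "\<lambda>j. subst b (a j)"]) simp
qed

lemma specialization_kernel:
  assumes inverse: "\<forall>j. subst \<psi> (\<phi> j) = Var j"
    and involves: "n \<in> vars (\<psi> n - subst \<psi> q)"
    and free: "n \<notin> vars p"
    and vanishes: "subst (Var(n := q)) (subst \<phi> p) = 0"
  shows "p = 0"
proof (rule ccontr)
  assume "p \<noteq> 0"
  obtain h where h: "subst \<phi> p = (Var n - q) * h"
    using Var_diff_dvd_diff_subst_upd[of n q "subst \<phi> p"] vanishes by (auto elim: dvdE)
  have "p = subst \<psi> (subst \<phi> p)"
    using inverse by (simp add: subst_subst)
  also have "\<dots> = (\<psi> n - subst \<psi> q) * subst \<psi> h"
    by (simp add: h subst_mult subst_diff)
  finally have "p = (\<psi> n - subst \<psi> q) * subst \<psi> h" .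
  with \<open>p \<noteq> 0\<close> have "vars (\<psi> n - subst \<psi> q) \<subseteq> vars p"
    by (metis mult_zero_right vars_subset_vars_mult)
  with involves free show False
    by blast
qed

lemma inj_on_specialization:
  assumes inverse: "\<forall>j. subst \<psi> (\<phi> j) = Var j"
    and involves: "n \<in> vars (\<psi> n - subst \<psi> q)"
  shows "inj_on (subst (\<lambda>i. if i < n then subst (Var(n := q)) (\<phi> i) else Var i)) (mpolys n)"
    (is "inj_on (subst ?s) _")
proof (rule inj_onI)
  fix x y
  assume "x \<in> mpolys n" "y \<in> mpolys n" and eq: "subst ?s x = subst ?s y"
  then have vars_diff_xy: "vars (x - y) \<subseteq> {..<n}"
    using vars_diff[of x y] by (auto simp: mpolys_iff_vars)
  have "subst (Var(n := q)) (subst \<phi> (x - y)) = subst ?s (x - y)"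
    unfolding subst_subst by (rule subst_cong) (use vars_diff_xy in auto)
  also have "\<dots> = 0"
    using eq by (simp add: subst_diff)
  finally have vanishes: "subst (Var(n := q)) (subst \<phi> (x - y)) = 0" .
  have "n \<notin> vars (x - y)"
    using vars_diff_xy by auto
  with vanishes have "x - y = 0"
    using specialization_kernel[OF inverse involves] by blast
  then show "x = y"
    by simp
qed

lemma exists_point_involving_last_var:
  assumes beyond: "\<forall>j>n. \<psi> j = Var j" and preimage: "subst \<psi> r = Var n"
  shows "\<exists>q\<in>mpolys n. n \<in> vars (\<psi> n - subst \<psi> q)"
proof (cases "n \<in> vars (\<psi> n)")
  case True
  moreover have "0 \<in> mpolys n"
    by (simp add: mpolys_def)
  ultimately show ?thesis
    by force
next
  case False
  have "\<exists>i<n. n \<in> vars (\<psi> i)"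
  proof (rule ccontr)
    assume none_below: "\<not> ?thesis"
    have "n \<notin> vars (\<psi> j)" for j
    proof (cases j n rule: linorder_cases)
      case less
      with none_below show ?thesis
        by blast
    next
      case equal
      with False show ?thesis
        by simp
    next
      case greater
      with beyond show ?thesis
        by simp
    qed
    then have "n \<notin> vars (subst \<psi> r)"
      using vars_subst by blast
    with preimage show False
      by simp
  qed
  then obtain i where "i < n" "n \<in> vars (\<psi> i)"
    by blast
  with False have "n \<in> vars (\<psi> n - subst \<psi> (Var i))"
    using vars_diff[of "\<psi> n" "\<psi> n - \<psi> i"] by auto
  moreover have "Var i \<in> mpolys n"
    using \<open>i < n\<close> by (simp add: mpolys_iff_vars)
  ultimately show ?thesis
    by blast
qed

theorem proposition2p4p1:
  fixes n :: nat and \<phi> :: "nat \<Rightarrow> mpoly"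
  assumes "n \<ge> 1"
    and "tame (n + 1) \<phi>"
  shows "\<exists>q \<in> mpolys n.
           inj_on (subst (\<lambda>i. if i < n then subst (Var(n := q)) (\<phi> i) else Var i)) (mpolys n)"
proof -
  obtain \<psi> where inverse: "\<forall>j. subst \<psi> (\<phi> j) = Var j" and beyond: "\<forall>j\<ge>n + 1. \<psi> j = Var j"
    using tame_inverse[OF assms(2)] by blast
  obtain q where "q \<in> mpolys n" "n \<in> vars (\<psi> n - subst \<psi> q)"
    using exists_point_involving_last_var[of n \<psi> "\<phi> n"] beyond inverse by auto
  then show ?thesis
    using inj_on_specialization[OF inverse] by blast
qed

end
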